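(* Let $\Sigma$ be a positive Borel measure on $\mathbb R$ with $\sup_{x\in\mathbb R}\Sigma((x-1,x+1))<\infty$, and let $\mathbf L:L^2(\mathbb R)\to L^2(\mathbb R,\Sigma)$ be $(\mathbf Lf)(\xi)=\int_{\mathbb R}\beta(x-\xi)f(x)\,dx$ with $\beta(\xi)=e^{-e^\xi}e^{\xi/2}$. Then the operator $\mathbf G=\mathbf L\mathbf L^*$ on $L^2(\mathbb R,\Sigma)$ has trivial kernel.
   Context: $\mathbf L$ is bounded under the stated condition on $\Sigma$, and its adjoint is $(\mathbf L^*g)(x)=\int\beta(x-\xi)g(\xi)\,d\Sigma(\xi)$. *)

theory Defs
  imports "HOL-Analysis.Analysis"
begin

definition beta :: "real \<Rightarrow> real" where
  "beta \<xi> = exp (- exp \<xi>) * exp (\<xi> / 2)"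

definition L_op :: "(real \<Rightarrow> complex) \<Rightarrow> real \<Rightarrow> complex" where
  "L_op f \<xi> = (\<integral>x. complex_of_real (beta (x - \<xi>)) * f x \<partial>lborel)"

definition L_adj :: "real measure \<Rightarrow> (real \<Rightarrow> complex) \<Rightarrow> real \<Rightarrow> complex" where
  "L_adj M g x = (\<integral>\<xi>. complex_of_real (beta (x - \<xi>)) * g \<xi> \<partial>M)"

definition G_op :: "real measure \<Rightarrow> (real \<Rightarrow> complex) \<Rightarrow> real \<Rightarrow> complex" where
  "G_op M g = L_op (L_adj M g)"

definition in_L2 :: "real measure \<Rightarrow> (real \<Rightarrow> complex) \<Rightarrow> bool" where
  "in_L2 M g \<longleftrightarrow> g \<in> borel_measurable M \<and> integrable M (\<lambda>x. (norm (g x))\<^sup>2)"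

end

(*
  For g in L^2(Sigma) put h = L* g. By Fubini, <G g, g> in L^2(Sigma) equals the squared
  L^2-norm of h, so G g = 0 forces h = 0 almost everywhere, hence everywhere because h is
  continuous. The uniform bound Sigma(x - 1, x + 1) <= C is what makes h well behaved:
  together with beta t <= e * beta (s - 1) for |t - s| <= 1 it bounds the integrals of
  beta (y - xi) d Sigma(xi) uniformly in y, so by Cauchy-Schwarz h is defined everywhere,
  continuous and square integrable.

  Finally beta (ln (k + 1) - xi) = sqrt (k + 1) * u xi ^ k * beta (- xi) with the Gumbel
  distribution function u xi = exp (- exp (- xi)). Hence h (ln (k + 1)) = 0 says that all
  moments of u vanish under the finite complex measure beta (- xi) g xi d Sigma(xi). By the
  Weierstrass approximation theorem this measure then annihilates every continuous function
  of u, hence (u being increasing) every half-line, so it is zero and g = 0 almost everywhere.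
*)

theory Submission
  imports Defs "HOL-Probability.Probability"
begin

lemma pred_in_greaterThanLessThan[measurable (raw)]:
  fixes f a b :: "'a \<Rightarrow> real"
  assumes [measurable]: "f \<in> borel_measurable M" "a \<in> borel_measurable M" "b \<in> borel_measurable M"
  shows "Measurable.pred M (\<lambda>x. f x \<in> {a x <..< b x})"
  unfolding greaterThanLessThan_iff by measurable

lemma borel_measurable_cnj[measurable (raw)]:
  "f \<in> borel_measurable M \<Longrightarrow> (\<lambda>x. cnj (f x)) \<in> borel_measurable M"
  by (rule borel_measurable_continuous_on[OF continuous_on_cnj[OF continuous_on_id]])

lemma integrable_bounded_scaleR:
  fixes f :: "'a \<Rightarrow> real" and \<rho> :: "'a \<Rightarrow> 'b::{banach, second_countable_topology}"
  assumes "integrable M \<rho>" "f \<in> borel_measurable M" "\<And>x. x \<in> space M \<Longrightarrow> \<bar>f x\<bar> \<le> B"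
  shows "integrable M (\<lambda>x. f x *\<^sub>R \<rho> x)"
proof (rule Bochner_Integration.integrable_bound[where f = "\<lambda>x. \<bar>B\<bar> * norm (\<rho> x)"])
  show "AE x in M. norm (f x *\<^sub>R \<rho> x) \<le> norm (\<bar>B\<bar> * norm (\<rho> x))"
    using assms(3) by (intro AE_I2) (force intro: mult_right_mono)
qed (use assms in auto)

lemma norm_integral_scaleR_le:
  fixes f :: "'a \<Rightarrow> real" and \<rho> :: "'a \<Rightarrow> 'b::{banach, second_countable_topology}"
  assumes \<rho>: "integrable M \<rho>" and f: "f \<in> borel_measurable M" and bound: "\<And>x. x \<in> space M \<Longrightarrow> \<bar>f x\<bar> \<le> \<epsilon>"
  shows "norm (\<integral>x. f x *\<^sub>R \<rho> x \<partial>M) \<le> \<epsilon> * (\<integral>x. norm (\<rho> x) \<partial>M)"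
proof -
  have "norm (\<integral>x. f x *\<^sub>R \<rho> x \<partial>M) \<le> (\<integral>x. norm (f x *\<^sub>R \<rho> x) \<partial>M)"
    by (rule integral_norm_bound)
  also have "\<dots> \<le> (\<integral>x. \<epsilon> * norm (\<rho> x) \<partial>M)"
    using integrable_norm[OF integrable_bounded_scaleR[OF \<rho> f bound]] bound \<rho>
    by (intro integral_mono) (auto intro: mult_right_mono)
  finally show ?thesis
    by simp
qed

lemma isCont_integral_dominated:
  fixes f :: "'p::{first_countable_topology, t2_space} \<Rightarrow> 'a \<Rightarrow> 'b::{banach, second_countable_topology}"
  assumes f: "\<And>t. f t \<in> borel_measurable M" and w: "integrable M w"
    and cont: "AE x in M. isCont (\<lambda>t. f t x) t0"
    and dominated: "\<forall>\<^sub>F t in nhds t0. AE x in M. norm (f t x) \<le> w x"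
  shows "isCont (\<lambda>t. \<integral>x. f t x \<partial>M) t0"
proof (rule continuous_at_sequentiallyI)
  fix s :: "nat \<Rightarrow> 'p" assume s: "s \<longlonglongrightarrow> t0"
  have "\<forall>\<^sub>F n in sequentially. AE x in M. norm (f (s n) x) \<le> w x"
    using eventually_compose_filterlim[OF dominated s] .
  then obtain N where N: "\<And>n. n \<ge> N \<Longrightarrow> AE x in M. norm (f (s n) x) \<le> w x"
    unfolding eventually_sequentially by blast
  have "(\<lambda>n. \<integral>x. f (s (n + N)) x \<partial>M) \<longlonglongrightarrow> (\<integral>x. f t0 x \<partial>M)"
  proof (rule integral_dominated_convergence[OF f f w])
    show "AE x in M. (\<lambda>n. f (s (n + N)) x) \<longlonglongrightarrow> f t0 x"
      using cont by eventually_elim (rule isCont_tendsto_compose[OF _ LIMSEQ_ignore_initial_segment[OF s]])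
  qed (use N in simp)
  then show "(\<lambda>n. \<integral>x. f (s n) x \<partial>M) \<longlonglongrightarrow> (\<integral>x. f t0 x \<partial>M)"
    by (rule LIMSEQ_offset)
qed

lemma AE_lborel_continuous_imp_eq:
  fixes f :: "'a::euclidean_space \<Rightarrow> 'b::t2_space"
  assumes "continuous_on UNIV f" and "AE x in lborel. f x = c"
  shows "f x = c"
  using mem_closed_if_AE_lebesgue[of "{x. f x = c}" x] assms
  by (simp add: closed_Collect_eq AE_completion)

lemma integral_polynomial_comp_scaleR_eq_0:
  fixes \<rho> :: "'a \<Rightarrow> 'b::{banach, second_countable_topology}"
  assumes \<rho>: "integrable M \<rho>" and u[measurable]: "u \<in> borel_measurable M"
    and u_01: "\<And>x. x \<in> space M \<Longrightarrow> u x \<in> {0..1}"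
    and moments: "\<And>k. (\<integral>x. u x ^ k *\<^sub>R \<rho> x \<partial>M) = 0"
    and p: "real_polynomial_function p"
  shows "(\<integral>x. p (u x) *\<^sub>R \<rho> x \<partial>M) = 0"
proof -
  obtain a n where p_eq: "p = (\<lambda>v. \<Sum>i\<le>n. a i * v ^ i)"
    using p real_polynomial_function_iff_sum by blast
  have "integrable M (\<lambda>x. u x ^ i *\<^sub>R \<rho> x)" for i
    by (rule integrable_bounded_scaleR[OF \<rho>, where B = 1]) (use u_01 in \<open>auto simp: power_abs intro!: power_le_one\<close>)
  then have "(\<integral>x. (\<Sum>i\<le>n. a i *\<^sub>R u x ^ i *\<^sub>R \<rho> x) \<partial>M) = (\<Sum>i\<le>n. a i *\<^sub>R (\<integral>x. u x ^ i *\<^sub>R \<rho> x \<partial>M))"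
    by (simp add: integral_sum del: scaleR_scaleR)
  then show ?thesis
    by (simp add: p_eq scaleR_sum_left moments)
qed

lemma integral_continuous_comp_scaleR_eq_0:
  fixes \<rho> :: "'a \<Rightarrow> 'b::{banach, second_countable_topology}"
  assumes \<rho>: "integrable M \<rho>" and u[measurable]: "u \<in> borel_measurable M"
    and u_01: "\<And>x. x \<in> space M \<Longrightarrow> u x \<in> {0..1}"
    and moments: "\<And>k. (\<integral>x. u x ^ k *\<^sub>R \<rho> x \<partial>M) = 0"
    and \<phi>: "continuous_on {0..1} \<phi>"
  shows "(\<integral>x. \<phi> (u x) *\<^sub>R \<rho> x \<partial>M) = 0"
proof -
  have \<phi>u[measurable]: "(\<lambda>x. \<phi> (u x)) \<in> borel_measurable M"
    using measurable_compose[OF measurable_restrict_space2[OF _ u]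
        borel_measurable_continuous_on_restrict[OF \<phi>]] u_01 by auto
  obtain B where B: "\<forall>v\<in>{0..1}. \<bar>\<phi> v\<bar> \<le> B"
    using compact_imp_bounded[OF compact_continuous_image[OF \<phi> compact_Icc]]
    unfolding bounded_real by blast
  define R where "R = (\<integral>x. norm (\<rho> x) \<partial>M)"
  have "0 \<le> R"
    by (simp add: R_def)
  have "norm (\<integral>x. \<phi> (u x) *\<^sub>R \<rho> x \<partial>M) \<le> e" if "e > 0" for e
  proof -
    define \<epsilon> where "\<epsilon> = e / (R + 1)"
    have "\<epsilon> > 0"
      using \<open>0 \<le> R\<close> \<open>e > 0\<close> by (simp add: \<epsilon>_def)
    then obtain p where p: "real_polynomial_function p"
      and approx: "\<And>v. v \<in> {0..1} \<Longrightarrow> \<bar>\<phi> v - p v\<bar> < \<epsilon>"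
      using Stone_Weierstrass_real_polynomial_function[OF compact_Icc \<phi>] by blast
    have [measurable]: "p \<in> borel_measurable borel"
      using p by (intro borel_measurable_continuous_onI continuous_on_polymonial_function)
        (simp add: real_polynomial_function_eq)
    have "integrable M (\<lambda>x. \<phi> (u x) *\<^sub>R \<rho> x)"
      by (rule integrable_bounded_scaleR[OF \<rho> \<phi>u]) (use B u_01 in blast)
    moreover have "integrable M (\<lambda>x. p (u x) *\<^sub>R \<rho> x)"
      by (rule integrable_bounded_scaleR[OF \<rho>, where B = "B + \<epsilon>"])
        (use B approx u_01 in \<open>force+\<close>)
    ultimately have "(\<integral>x. \<phi> (u x) *\<^sub>R \<rho> x \<partial>M) = (\<integral>x. (\<phi> (u x) - p (u x)) *\<^sub>R \<rho> x \<partial>M)"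
      using integral_polynomial_comp_scaleR_eq_0[OF \<rho> u u_01 moments p]
      by (simp add: scaleR_diff_left)
    also have "norm \<dots> \<le> \<epsilon> * R"
      unfolding R_def using approx u_01 by (intro norm_integral_scaleR_le \<rho>) (auto intro: less_imp_le)
    also have "\<dots> \<le> e"
      using \<open>0 \<le> R\<close> \<open>e > 0\<close> by (simp add: \<epsilon>_def field_simps)
    finally show ?thesis .
  qed
  then have "norm (\<integral>x. \<phi> (u x) *\<^sub>R \<rho> x \<partial>M) \<le> 0"
    by (rule field_le_epsilon) simp
  then show ?thesis
    by simp
qed

lemma tendsto_ramp_indicator_atMost:
  "(\<lambda>n. max 0 (min 1 (1 - (real n + 1) * (v - c)))) \<longlonglongrightarrow> indicator {..c} v"
proof (cases "v \<le> c")
  case True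
  then show ?thesis
    by (simp add: mult_nonneg_nonpos)
next
  case False
  obtain N :: nat where N: "1 / (v - c) \<le> real N"
    using real_arch_simple by blast
  have "max 0 (min 1 (1 - (real n + 1) * (v - c))) = 0" if "n \<ge> N" for n
  proof -
    have "1 \<le> real N * (v - c)"
      using N False by (simp add: field_simps)
    also have "\<dots> \<le> (real n + 1) * (v - c)"
      using that False by (intro mult_right_mono) auto
    finally show ?thesis
      by simp
  qed
  then have "\<forall>\<^sub>F n in sequentially. max 0 (min 1 (1 - (real n + 1) * (v - c))) = 0"
    by (auto simp: eventually_sequentially)
  with False show ?thesis
    by (simp add: tendsto_eventually)
qed

lemma integral_indicator_atMost_comp_scaleR_eq_0:
  fixes \<rho> :: "'a \<Rightarrow> 'b::{banach, second_countable_topology}" and u :: "'a \<Rightarrow> real"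
  assumes \<rho>: "integrable M \<rho>" and u[measurable]: "u \<in> borel_measurable M"
    and continuous: "\<And>\<phi>. continuous_on UNIV \<phi> \<Longrightarrow> (\<integral>x. \<phi> (u x) *\<^sub>R \<rho> x \<partial>M) = 0"
  shows "(\<integral>x. indicator {..c} (u x) *\<^sub>R \<rho> x \<partial>M) = 0"
proof -
  define \<phi> where "\<phi> n v = max 0 (min 1 (1 - (real n + 1) * (v - c)))" for n :: nat and v
  have "(\<lambda>n. \<integral>x. \<phi> n (u x) *\<^sub>R \<rho> x \<partial>M) \<longlonglongrightarrow> (\<integral>x. indicator {..c} (u x) *\<^sub>R \<rho> x \<partial>M)"
  proof (rule integral_dominated_convergence[where w = "\<lambda>x. norm (\<rho> x)"])
    show "AE x in M. (\<lambda>n. \<phi> n (u x) *\<^sub>R \<rho> x) \<longlonglongrightarrow> indicator {..c} (u x) *\<^sub>R \<rho> x"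
      unfolding \<phi>_def by (intro AE_I2 tendsto_scaleR tendsto_ramp_indicator_atMost tendsto_const)
    show "AE x in M. norm (\<phi> n (u x) *\<^sub>R \<rho> x) \<le> norm (\<rho> x)" for n
      by (intro AE_I2) (simp add: \<phi>_def mult_left_le_one_le)
  qed (use \<rho> in \<open>auto simp: \<phi>_def\<close>)
  moreover have "(\<integral>x. \<phi> n (u x) *\<^sub>R \<rho> x \<partial>M) = 0" for n
    by (rule continuous) (auto simp: \<phi>_def intro!: continuous_intros)
  ultimately show ?thesis
    by (simp add: LIMSEQ_const_iff)
qed

lemma AE_eq_0_if_set_integral_atMost_eq_0:
  fixes M :: "real measure" and f :: "real \<Rightarrow> 'b::{banach, second_countable_topology}"
  assumes "sigma_finite_measure M" and sets_M: "sets M = sets borel" and f: "integrable M f"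
    and atMost: "\<And>a. (\<integral>x\<in>{..a}. f x \<partial>M) = 0"
  shows "AE x in M. f x = 0"
proof (rule sigma_finite_measure.density_zero[OF assms(1) f])
  have set_integrable: "set_integrable M A f" if "A \<in> sets borel" for A
    using that sets_M f by (simp add: set_integrable_def integrable_mult_indicator)
  have UNIV: "(\<integral>x\<in>UNIV. f x \<partial>M) = 0"
  proof -
    have "(\<lambda>n. \<integral>x\<in>{..real n}. f x \<partial>M) \<longlonglongrightarrow> (\<integral>x\<in>(\<Union>n. {..real n}). f x \<partial>M)"
      using sets_M set_integrable
      by (intro set_integral_cont_up) (auto simp: incseq_def)
    moreover have "(\<Union>n. {..real n}) = UNIV"
      by (auto intro: real_arch_simple)
    ultimately show ?thesis
      by (simp add: atMost LIMSEQ_const_iff)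
  qed
  fix A assume "A \<in> sets M"
  have "Int_stable (range (atMost :: real \<Rightarrow> real set))" "range atMost \<subseteq> Pow (UNIV :: real set)"
    by (auto simp: Int_stable_def)
  moreover from \<open>A \<in> sets M\<close> have "A \<in> sigma_sets UNIV (range atMost)"
    using sets_M by (simp add: borel_eq_atMost)
  ultimately show "(\<integral>x\<in>A. f x \<partial>M) = 0"
  proof (induction rule: sigma_sets_induct_disjoint)
    case (compl A)
    then have "A \<in> sets borel" by (simp add: borel_eq_atMost)
    then have "(\<integral>x\<in>A \<union> (UNIV - A). f x \<partial>M) = (\<integral>x\<in>A. f x \<partial>M) + (\<integral>x\<in>UNIV - A. f x \<partial>M)"
      by (intro set_integral_Un set_integrable) auto
    then show ?case
      using UNIV compl.IH by simp
  next
    case (union A)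
    then have "range A \<subseteq> sets borel" by (simp add: borel_eq_atMost)
    then show ?case
      using union sets_M set_integrable
      by (subst lebesgue_integral_countable_add) (auto simp: disjoint_family_on_def)
  qed (use atMost in \<open>auto simp: set_lebesgue_integral_def\<close>)
qed

lemma beta_pos: "0 < beta t"
  by (simp add: beta_def)

lemma beta_nonneg[simp]: "0 \<le> beta t"
  using beta_pos less_imp_le by blast

lemma beta_measurable[measurable]: "beta \<in> borel_measurable borel"
  unfolding beta_def by measurable

lemma isCont_beta: "isCont beta t"
  unfolding beta_def by (intro continuous_intros) auto

lemma beta_le_1: "beta t \<le> 1"
proof -
  have "t / 2 \<le> exp t"
    using exp_ge_add_one_self[of t] exp_gt_zero[of t] by linarith
  then show ?thesis
    by (simp add: beta_def flip: exp_add)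
qed

lemma beta_le_exp_abs: "beta t \<le> exp (- \<bar>t\<bar> / 2)"
proof -
  have "t \<le> exp t"
    using exp_ge_add_one_self[of t] by linarith
  then have "- exp t + t / 2 \<le> - \<bar>t\<bar> / 2"
    using exp_gt_zero[of t] by (cases "t \<le> 0") auto
  then show ?thesis
    by (simp add: beta_def flip: exp_add)
qed

lemma beta_le_exp_1_mult_beta:
  assumes "\<bar>t - s\<bar> \<le> 1"
  shows "beta t \<le> exp 1 * beta (s - 1)"
proof -
  have "exp (s - 1) \<le> exp t" "t \<le> s + 1"
    using assms by (simp_all add: abs_le_iff)
  then have "- exp t + t / 2 \<le> 1 + (- exp (s - 1) + (s - 1) / 2)"
    by argo
  then show ?thesis
    by (simp add: beta_def flip: exp_add)
qed

lemma nn_integral_exp_minus_abs: "(\<integral>\<^sup>+x. ennreal (exp (- \<bar>x\<bar>)) \<partial>lborel) = 2"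
proof -
  have Ici: "(\<integral>\<^sup>+x. ennreal (exp (- x)) * indicator {0..} x \<partial>lborel) = 1"
    using nn_intergal_power_times_exp_Ici[of 0] by simp
  have "(\<integral>\<^sup>+x. ennreal (exp (- \<bar>x\<bar>)) \<partial>lborel) =
      (\<integral>\<^sup>+x. ennreal (exp (- x)) * indicator {0..} x + ennreal (exp x) * indicator {0<..} (- x) \<partial>lborel)"
    by (intro nn_integral_cong) (auto split: split_indicator)
  also have "\<dots> = 1 + (\<integral>\<^sup>+x. ennreal (exp (- x)) * indicator {0<..} x \<partial>lborel)"
    using nn_integral_real_affine[of "\<lambda>x. ennreal (exp (- x)) * indicator {0<..} x" "-1" 0]
    by (subst nn_integral_add) (auto simp: Ici)
  also have "(\<integral>\<^sup>+x. ennreal (exp (- x)) * indicator {0<..} x \<partial>lborel) = 1"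
    unfolding Ici[symmetric] using AE_lborel_singleton[of 0]
    by (intro nn_integral_cong_AE) (auto elim!: eventually_mono split: split_indicator)
  finally show ?thesis
    by simp
qed

lemma nn_integral_beta_finite: "(\<integral>\<^sup>+x. ennreal (beta x) \<partial>lborel) < \<infinity>"
proof -
  have "(\<integral>\<^sup>+x. ennreal (beta x) \<partial>lborel) \<le> (\<integral>\<^sup>+x. ennreal (exp (- \<bar>x\<bar> / 2)) \<partial>lborel)"
    by (intro nn_integral_mono ennreal_leI beta_le_exp_abs)
  also have "\<dots> = 2 * (\<integral>\<^sup>+x. ennreal (exp (- \<bar>x\<bar>)) \<partial>lborel)"
    using nn_integral_real_affine[of "\<lambda>x. ennreal (exp (- \<bar>x\<bar> / 2))" 2 0] by (simp add: abs_mult)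
  also have "\<dots> < \<infinity>"
    by (simp add: nn_integral_exp_minus_abs flip: ennreal_numeral ennreal_mult)
  finally show ?thesis .
qed

lemma nn_integral_beta_translate:
  "(\<integral>\<^sup>+x. ennreal (beta (x - t)) \<partial>lborel) = (\<integral>\<^sup>+x. ennreal (beta x) \<partial>lborel)"
  using nn_integral_real_affine[of "\<lambda>x. ennreal (beta x)" 1 "- t"] by simp

lemma nn_integral_beta_reflect:
  "(\<integral>\<^sup>+x. ennreal (beta (t - x)) \<partial>lborel) = (\<integral>\<^sup>+x. ennreal (beta x) \<partial>lborel)"
  using nn_integral_real_affine[of "\<lambda>x. ennreal (beta x)" "-1" t] by simp

definition gumbel_cdf :: "real \<Rightarrow> real" where
  "gumbel_cdf \<xi> = exp (- exp (- \<xi>))"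

lemma gumbel_cdf_measurable[measurable]: "gumbel_cdf \<in> borel_measurable borel"
  unfolding gumbel_cdf_def by measurable

lemma gumbel_cdf_in_01: "gumbel_cdf \<xi> \<in> {0..1}"
  by (simp add: gumbel_cdf_def less_imp_le)

lemma gumbel_cdf_le_iff: "gumbel_cdf \<xi> \<le> gumbel_cdf a \<longleftrightarrow> \<xi> \<le> a"
  by (simp add: gumbel_cdf_def)

lemma beta_ln_minus:
  "beta (ln (real k + 1) - \<xi>) = sqrt (real k + 1) * gumbel_cdf \<xi> ^ k * beta (- \<xi>)"
proof -
  have "exp (ln (real k + 1) - \<xi>) = real (Suc k) * exp (- \<xi>)"
    by (simp add: exp_diff exp_minus field_simps)
  then have A: "exp (- exp (ln (real k + 1) - \<xi>)) = gumbel_cdf \<xi> ^ Suc k"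
    unfolding gumbel_cdf_def by (metis exp_of_nat_mult mult_minus_right)
  have "exp ((ln (real k + 1) - \<xi>) / 2) = exp (ln (real k + 1) / 2) * exp (- \<xi> / 2)"
    by (simp add: diff_divide_distrib flip: exp_add)
  also have "exp (ln (real k + 1) / 2) = sqrt (real k + 1)"
    using powr_half_sqrt[of "real k + 1"] by (simp add: powr_def)
  finally have B: "exp ((ln (real k + 1) - \<xi>) / 2) = sqrt (real k + 1) * exp (- \<xi> / 2)" .
  show ?thesis
    by (simp add: beta_def A B mult_ac flip: gumbel_cdf_def)
qed

lemma L_adj_at_ln:
  "L_adj M g (ln (real k + 1)) = sqrt (real k + 1) *\<^sub>R (\<integral>\<xi>. gumbel_cdf \<xi> ^ k *\<^sub>R beta (- \<xi>) *\<^sub>R g \<xi> \<partial>M)"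
  by (simp add: L_adj_def beta_ln_minus scaleR_conv_of_real mult_ac flip: integral_mult_right_zero)

locale uniformly_locally_finite_measure =
  fixes M :: "real measure" and C :: real
  assumes sets_M[measurable_cong]: "sets M = sets borel"
    and emeasure_unit_ball_le: "\<And>x. emeasure M {x - 1 <..< x + 1} \<le> ennreal C"
begin

lemma space_M[simp]: "space M = UNIV"
  using sets_eq_imp_space_eq[OF sets_M] by simp

lemma sigma_finite: "sigma_finite_measure M"
proof (rule sigma_finite_measure.intro)
  let ?A = "range (\<lambda>k::int. {real_of_int k - 1 <..< real_of_int k + 1})"
  have "x \<in> {real_of_int \<lfloor>x\<rfloor> - 1 <..< real_of_int \<lfloor>x\<rfloor> + 1}" for x
    using of_int_floor_le[of x] real_of_int_floor_add_one_gt[of x]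
    unfolding greaterThanLessThan_iff by linarith
  then have "x \<in> \<Union>?A" for x
    by blast
  then have cover: "\<Union>?A = space M"
    by auto
  have finite_pieces: "emeasure M A \<noteq> \<infinity>" if "A \<in> ?A" for A
  proof -
    from that obtain k where "A = {real_of_int k - 1 <..< real_of_int k + 1}"
      by blast
    then show ?thesis
      using emeasure_unit_ball_le[of "real_of_int k"] by (auto simp: top_unique)
  qed
  show "\<exists>A. countable A \<and> A \<subseteq> sets M \<and> \<Union>A = space M \<and> (\<forall>a\<in>A. emeasure M a \<noteq> \<infinity>)"
  proof (intro exI[of _ ?A] conjI)
    show "?A \<subseteq> sets M"
      by (auto simp: sets_M)
    show "countable ?A"
      by simp
    show "\<Union>?A = space M"
      by (rule cover)
    show "\<forall>a\<in>?A. emeasure M a \<noteq> \<infinity>"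
      using finite_pieces by blast
  qed
qed

interpretation M: sigma_finite_measure M
  by (rule sigma_finite)

interpretation lborel_M: pair_sigma_finite lborel M
  by (intro pair_sigma_finite.intro lborel.sigma_finite_measure_axioms sigma_finite)

definition kernel_bound :: ennreal where
  "kernel_bound = ennreal (exp 1) * ennreal C * (\<integral>\<^sup>+x. ennreal (beta x) \<partial>lborel)"

lemma kernel_bound_finite: "kernel_bound < \<infinity>"
  using nn_integral_beta_finite by (simp add: kernel_bound_def ennreal_mult_less_top)

lemma nn_integral_beta_le: "(\<integral>\<^sup>+\<xi>. ennreal (beta (y - \<xi>)) \<partial>M) \<le> kernel_bound"
proof -
  \<comment> \<open>Dominate beta (y - xi) by the average of e * beta (y - 1 - x) over the window |x - xi| < 1;
    after exchanging the integrals, the window measures are bounded by C.\<close>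
  let ?w = "\<lambda>x. ennreal (exp 1) * ennreal (beta (y - 1 - x))"
  have shift: "beta (y - \<xi>) \<le> exp 1 * beta (y - 1 - x)" if "\<xi> - 1 < x" "x < \<xi> + 1" for x \<xi>
    using beta_le_exp_1_mult_beta[of "y - \<xi>" "y - x"] that by (simp add: algebra_simps)
  have "ennreal (beta (y - \<xi>)) \<le> (\<integral>\<^sup>+x. ?w x * indicator {x - 1 <..< x + 1} \<xi> \<partial>lborel)" for \<xi>
  proof -
    have "ennreal (beta (y - \<xi>)) \<le> 2 * ennreal (beta (y - \<xi>))"
      by (simp add: mult_2)
    also have "\<dots> = (\<integral>\<^sup>+x. ennreal (beta (y - \<xi>)) * indicator {\<xi> - 1 <..< \<xi> + 1} x \<partial>lborel)"
      by (simp add: nn_integral_cmult_indicator mult.commute)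
    also have "\<dots> \<le> (\<integral>\<^sup>+x. ?w x * indicator {x - 1 <..< x + 1} \<xi> \<partial>lborel)"
      using shift by (intro nn_integral_mono)
        (auto split: split_indicator simp flip: ennreal_mult intro!: ennreal_leI)
    finally show ?thesis .
  qed
  then have "(\<integral>\<^sup>+\<xi>. ennreal (beta (y - \<xi>)) \<partial>M) \<le>
      (\<integral>\<^sup>+\<xi>. (\<integral>\<^sup>+x. ?w x * indicator {x - 1 <..< x + 1} \<xi> \<partial>lborel) \<partial>M)"
    by (intro nn_integral_mono)
  also have "\<dots> = (\<integral>\<^sup>+x. ?w x * emeasure M {x - 1 <..< x + 1} \<partial>lborel)"
    by (subst lborel_M.Fubini') (simp_all add: nn_integral_cmult_indicator)
  also have "\<dots> \<le> (\<integral>\<^sup>+x. ?w x * ennreal C \<partial>lborel)"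
    by (intro nn_integral_mono mult_left_mono emeasure_unit_ball_le) simp
  also have "\<dots> = (\<integral>\<^sup>+x. ennreal (exp 1) * ennreal C * ennreal (beta (y - 1 - x)) \<partial>lborel)"
    by (simp add: mult_ac)
  also have "\<dots> = kernel_bound"
    by (simp add: nn_integral_cmult nn_integral_beta_reflect kernel_bound_def)
  finally show ?thesis .
qed

context
  fixes g :: "real \<Rightarrow> complex"
  assumes g_measurable[measurable]: "g \<in> borel_measurable M"
    and g_L2: "integrable M (\<lambda>\<xi>. (norm (g \<xi>))\<^sup>2)"
begin

definition L_adj_abs :: "real \<Rightarrow> ennreal" where
  "L_adj_abs y = (\<integral>\<^sup>+\<xi>. ennreal (beta (y - \<xi>) * norm (g \<xi>)) \<partial>M)"

lemma nn_integral_norm_sq_finite: "(\<integral>\<^sup>+\<xi>. ennreal ((norm (g \<xi>))\<^sup>2) \<partial>M) < \<infinity>"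
  using g_L2 by (simp add: integrable_iff_bounded)

lemma nn_integral_beta_norm_sq_le:
  "(\<integral>\<^sup>+\<xi>. ennreal (beta (y - \<xi>) * (norm (g \<xi>))\<^sup>2) \<partial>M) \<le> (\<integral>\<^sup>+\<xi>. ennreal ((norm (g \<xi>))\<^sup>2) \<partial>M)"
  by (intro nn_integral_mono ennreal_leI mult_left_le_one_le) (auto simp: beta_le_1)

lemma L_adj_abs_sq_le:
  "(L_adj_abs y)\<^sup>2 \<le> kernel_bound * (\<integral>\<^sup>+\<xi>. ennreal (beta (y - \<xi>) * (norm (g \<xi>))\<^sup>2) \<partial>M)"
proof -
  let ?f = "\<lambda>\<xi>. ennreal (sqrt (beta (y - \<xi>)))"
  let ?h = "\<lambda>\<xi>. ennreal (sqrt (beta (y - \<xi>)) * norm (g \<xi>))"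
  have "(L_adj_abs y)\<^sup>2 = (\<integral>\<^sup>+\<xi>. ?f \<xi> * ?h \<xi> \<partial>M)\<^sup>2"
    unfolding L_adj_abs_def by (simp add: mult.assoc[symmetric] flip: ennreal_mult)
  also have "\<dots> \<le> (\<integral>\<^sup>+\<xi>. ?f \<xi> ^ 2 \<partial>M) * (\<integral>\<^sup>+\<xi>. ?h \<xi> ^ 2 \<partial>M)"
    by (rule Cauchy_Schwarz_nn_integral) measurable
  also have "\<dots> = (\<integral>\<^sup>+\<xi>. ennreal (beta (y - \<xi>)) \<partial>M) * (\<integral>\<^sup>+\<xi>. ennreal (beta (y - \<xi>) * (norm (g \<xi>))\<^sup>2) \<partial>M)"
    by (simp add: ennreal_power power_mult_distrib)
  also have "\<dots> \<le> kernel_bound * (\<integral>\<^sup>+\<xi>. ennreal (beta (y - \<xi>) * (norm (g \<xi>))\<^sup>2) \<partial>M)"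
    by (intro mult_right_mono nn_integral_beta_le) simp
  finally show ?thesis .
qed

lemma L_adj_abs_finite: "L_adj_abs y < \<infinity>"
proof -
  have "(L_adj_abs y)\<^sup>2 \<le> kernel_bound * (\<integral>\<^sup>+\<xi>. ennreal ((norm (g \<xi>))\<^sup>2) \<partial>M)"
    using L_adj_abs_sq_le nn_integral_beta_norm_sq_le by (meson mult_left_mono order_trans zero_le)
  also have "\<dots> < \<infinity>"
    using kernel_bound_finite nn_integral_norm_sq_finite by (simp add: ennreal_mult_less_top)
  finally show ?thesis
    by (simp add: power_less_top_ennreal)
qed

lemma nn_integral_norm_kernel:
  "(\<integral>\<^sup>+\<xi>. ennreal (norm (complex_of_real (beta (y - \<xi>)) * g \<xi>)) \<partial>M) = L_adj_abs y"
  unfolding L_adj_abs_def using beta_pos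
  by (intro nn_integral_cong) (simp add: norm_mult abs_of_pos)

lemma integrable_kernel: "integrable M (\<lambda>\<xi>. complex_of_real (beta (y - \<xi>)) * g \<xi>)"
  using L_adj_abs_finite by (simp add: integrable_iff_bounded nn_integral_norm_kernel)

lemma norm_L_adj_le: "ennreal (norm (L_adj M g y)) \<le> L_adj_abs y"
  unfolding L_adj_def nn_integral_norm_kernel[symmetric]
  by (rule integral_norm_bound_ennreal[OF integrable_kernel])

lemma nn_integral_L_adj_abs_sq_finite: "(\<integral>\<^sup>+y. (L_adj_abs y)\<^sup>2 \<partial>lborel) < \<infinity>"
proof -
  have "(\<integral>\<^sup>+y. (L_adj_abs y)\<^sup>2 \<partial>lborel)
      \<le> kernel_bound * (\<integral>\<^sup>+y. (\<integral>\<^sup>+\<xi>. ennreal (beta (y - \<xi>) * (norm (g \<xi>))\<^sup>2) \<partial>M) \<partial>lborel)"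
    by (subst nn_integral_cmult[symmetric]) (measurable, intro nn_integral_mono L_adj_abs_sq_le)
  also have "(\<integral>\<^sup>+y. (\<integral>\<^sup>+\<xi>. ennreal (beta (y - \<xi>) * (norm (g \<xi>))\<^sup>2) \<partial>M) \<partial>lborel)
      = (\<integral>\<^sup>+\<xi>. (\<integral>\<^sup>+y. ennreal ((norm (g \<xi>))\<^sup>2) * ennreal (beta (y - \<xi>)) \<partial>lborel) \<partial>M)"
    by (subst lborel_M.Fubini') (auto intro!: nn_integral_cong simp: ennreal_mult mult.commute)
  also have "\<dots> = (\<integral>\<^sup>+\<xi>. ennreal ((norm (g \<xi>))\<^sup>2) \<partial>M) * (\<integral>\<^sup>+x. ennreal (beta x) \<partial>lborel)"
    by (simp add: nn_integral_cmult nn_integral_beta_translate nn_integral_multc)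
  also have "kernel_bound * \<dots> < \<infinity>"
    using kernel_bound_finite nn_integral_norm_sq_finite nn_integral_beta_finite
    by (simp add: ennreal_mult_less_top)
  finally show ?thesis .
qed

lemma continuous_L_adj: "continuous_on UNIV (L_adj M g)"
  unfolding continuous_on_eq_continuous_at[OF open_UNIV] L_adj_def
proof (intro ballI isCont_integral_dominated)
  fix x0 :: real
  let ?w = "\<lambda>\<xi>. exp 1 * norm (complex_of_real (beta (x0 - 1 - \<xi>)) * g \<xi>)"
  show "integrable M ?w"
    by (intro integrable_mult_right integrable_norm integrable_kernel)
  show "AE \<xi> in M. isCont (\<lambda>x. complex_of_real (beta (x - \<xi>)) * g \<xi>) x0"
    by (intro AE_I2 continuous_intros isCont_o2[OF _ isCont_beta])
  have "AE \<xi> in M. norm (complex_of_real (beta (x - \<xi>)) * g \<xi>) \<le> ?w \<xi>" if "dist x x0 < 1" for x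
  proof (rule AE_I2)
    fix \<xi>
    have "beta (x - \<xi>) \<le> exp 1 * beta (x0 - \<xi> - 1)"
      using that by (intro beta_le_exp_1_mult_beta) (simp add: dist_real_def)
    then have "norm (g \<xi>) * beta (x - \<xi>) \<le> norm (g \<xi>) * (exp 1 * beta (x0 - \<xi> - 1))"
      by (rule mult_left_mono) simp
    then show "norm (complex_of_real (beta (x - \<xi>)) * g \<xi>) \<le> ?w \<xi>"
      by (simp add: norm_mult algebra_simps)
  qed
  then show "\<forall>\<^sub>F x in nhds x0. AE \<xi> in M. norm (complex_of_real (beta (x - \<xi>)) * g \<xi>) \<le> ?w \<xi>"
    by (intro eventually_nhds_metric[THEN iffD2] exI[of _ 1]) auto
qed measurable

lemma L_adj_measurable[measurable]: "L_adj M g \<in> borel_measurable borel"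
  by (rule borel_measurable_continuous_onI[OF continuous_L_adj])

lemma integrable_norm_L_adj_sq: "integrable lborel (\<lambda>x. (norm (L_adj M g x))\<^sup>2)"
proof -
  have "(\<integral>\<^sup>+x. ennreal ((norm (L_adj M g x))\<^sup>2) \<partial>lborel) \<le> (\<integral>\<^sup>+x. (L_adj_abs x)\<^sup>2 \<partial>lborel)"
    using norm_L_adj_le by (intro nn_integral_mono) (simp add: power_mono flip: ennreal_power)
  then show ?thesis
    using nn_integral_L_adj_abs_sq_finite by (simp add: integrable_iff_bounded)
qed

lemma integrable_G_op_pairing:
  "integrable (lborel \<Otimes>\<^sub>M M) (\<lambda>(x, \<xi>). cnj (g \<xi>) * (complex_of_real (beta (x - \<xi>)) * L_adj M g x))"
  (is "integrable _ ?f")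
  unfolding integrable_iff_bounded
proof
  have "(\<integral>\<^sup>+p. ennreal (norm (?f p)) \<partial>(lborel \<Otimes>\<^sub>M M))
      = (\<integral>\<^sup>+x. (\<integral>\<^sup>+\<xi>. ennreal (norm (L_adj M g x)) * ennreal (beta (x - \<xi>) * norm (g \<xi>)) \<partial>M) \<partial>lborel)"
    by (subst M.nn_integral_fst[symmetric])
      (auto intro!: nn_integral_cong simp: norm_mult mult_ac simp flip: ennreal_mult)
  also have "\<dots> = (\<integral>\<^sup>+x. ennreal (norm (L_adj M g x)) * L_adj_abs x \<partial>lborel)"
    unfolding L_adj_abs_def by (simp add: nn_integral_cmult)
  also have "\<dots> \<le> (\<integral>\<^sup>+x. (L_adj_abs x)\<^sup>2 \<partial>lborel)"
    using norm_L_adj_le by (intro nn_integral_mono) (simp add: power2_eq_square mult_right_mono)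
  also have "\<dots> < \<infinity>"
    by (rule nn_integral_L_adj_abs_sq_finite)
  finally show "(\<integral>\<^sup>+p. ennreal (norm (?f p)) \<partial>(lborel \<Otimes>\<^sub>M M)) < \<infinity>" .
qed measurable

lemma integral_cnj_mult_G_op:
  "(\<integral>\<xi>. cnj (g \<xi>) * G_op M g \<xi> \<partial>M) = complex_of_real (\<integral>x. (norm (L_adj M g x))\<^sup>2 \<partial>lborel)"
proof -
  have "(\<integral>\<xi>. cnj (g \<xi>) * G_op M g \<xi> \<partial>M)
      = (\<integral>\<xi>. (\<integral>x. cnj (g \<xi>) * (complex_of_real (beta (x - \<xi>)) * L_adj M g x) \<partial>lborel) \<partial>M)"
    by (simp add: G_op_def L_op_def)
  also have "\<dots> = (\<integral>x. (\<integral>\<xi>. cnj (g \<xi>) * (complex_of_real (beta (x - \<xi>)) * L_adj M g x) \<partial>M) \<partial>lborel)"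
    using lborel_M.Fubini_integral[OF integrable_G_op_pairing] by simp
  also have "\<dots> = (\<integral>x. L_adj M g x * cnj (L_adj M g x) \<partial>lborel)"
  proof (intro Bochner_Integration.integral_cong refl)
    fix x
    have "(\<integral>\<xi>. cnj (g \<xi>) * (complex_of_real (beta (x - \<xi>)) * L_adj M g x) \<partial>M)
        = (\<integral>\<xi>. L_adj M g x * cnj (complex_of_real (beta (x - \<xi>)) * g \<xi>) \<partial>M)"
      by (simp add: mult_ac)
    also have "\<dots> = L_adj M g x * cnj (L_adj M g x)"
      by (simp only: integral_mult_right_zero Bochner_Integration.integral_cnj L_adj_def)
    finally show "(\<integral>\<xi>. cnj (g \<xi>) * (complex_of_real (beta (x - \<xi>)) * L_adj M g x) \<partial>M)
        = L_adj M g x * cnj (L_adj M g x)" .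
  qed
  also have "\<dots> = complex_of_real (\<integral>x. (norm (L_adj M g x))\<^sup>2 \<partial>lborel)"
    by (simp only: complex_norm_square[symmetric] integral_complex_of_real)
  finally show ?thesis .
qed

lemma L_adj_eq_0_if_G_op_AE_eq_0:
  assumes "AE \<xi> in M. G_op M g \<xi> = 0"
  shows "L_adj M g x = 0"
proof -
  have "(\<integral>\<xi>. cnj (g \<xi>) * G_op M g \<xi> \<partial>M) = 0"
    using assms by (intro integral_eq_zero_AE) auto
  then have "(\<integral>x. (norm (L_adj M g x))\<^sup>2 \<partial>lborel) = 0"
    by (simp add: integral_cnj_mult_G_op)
  then have "AE x in lborel. L_adj M g x = 0"
    by (simp add: integral_nonneg_eq_0_iff_AE[OF integrable_norm_L_adj_sq])
  then show ?thesis
    by (rule AE_lborel_continuous_imp_eq[OF continuous_L_adj])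
qed

lemma AE_eq_0_if_L_adj_eq_0:
  assumes L_adj_0: "\<And>x. L_adj M g x = 0"
  shows "AE \<xi> in M. g \<xi> = 0"
proof -
  define \<rho> where "\<rho> \<xi> = beta (- \<xi>) *\<^sub>R g \<xi>" for \<xi>
  have \<rho>: "integrable M \<rho>"
    using integrable_kernel[of 0] by (simp add: \<rho>_def[abs_def] scaleR_conv_of_real)
  have moments: "(\<integral>\<xi>. gumbel_cdf \<xi> ^ k *\<^sub>R \<rho> \<xi> \<partial>M) = 0" for k
    using L_adj_at_ln[of M g k] by (simp add: L_adj_0 \<rho>_def)
  have "(\<integral>\<xi>\<in>{..a}. \<rho> \<xi> \<partial>M) = 0" for a
  proof -
    have "(\<integral>\<xi>. indicator {..gumbel_cdf a} (gumbel_cdf \<xi>) *\<^sub>R \<rho> \<xi> \<partial>M) = 0"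
      using integral_continuous_comp_scaleR_eq_0[OF \<rho> _ _ moments] gumbel_cdf_in_01
      by (intro integral_indicator_atMost_comp_scaleR_eq_0[OF \<rho>]) (auto intro: continuous_on_subset)
    then show ?thesis
      by (simp add: set_lebesgue_integral_def indicator_def gumbel_cdf_le_iff)
  qed
  then have "AE \<xi> in M. \<rho> \<xi> = 0"
    using AE_eq_0_if_set_integral_atMost_eq_0[OF sigma_finite sets_M \<rho>] by blast
  then show ?thesis
    by eventually_elim (metis \<rho>_def beta_pos less_irrefl scaleR_eq_0_iff)
qed

end

end

theorem lemma7p4:
  fixes M :: "real measure" and g :: "real \<Rightarrow> complex"
  assumes borel: "sets M = sets borel"
    and unif: "\<exists>C::real. \<forall>x. emeasure M {x - 1 <..< x + 1} \<le> ennreal C"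
    and gL2: "in_L2 M g"
    and ker: "AE \<xi> in M. G_op M g \<xi> = 0"
  shows "AE \<xi> in M. g \<xi> = 0"
proof -
  obtain C where "\<And>x. emeasure M {x - 1 <..< x + 1} \<le> ennreal C"
    using unif by blast
  then interpret uniformly_locally_finite_measure M C
    using borel by unfold_locales
  have g: "g \<in> borel_measurable M" "integrable M (\<lambda>\<xi>. (norm (g \<xi>))\<^sup>2)"
    using gL2 by (simp_all add: in_L2_def)
  show ?thesis
    using AE_eq_0_if_L_adj_eq_0[OF g L_adj_eq_0_if_G_op_AE_eq_0[OF g ker]] .
qed

end
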